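(* Let $V$ be a nonempty set, $E\subset V\times V$, $W\subset V$. (a) If $W',W''\subset W$ are such that $W'$ is contained in one equivalence class and $W''$ in another, distinct, equivalence class of the partial equivalence relation $C_W$, then $\operatorname{cl}_W(W')\cap\operatorname{cl}_W(W'')=\emptyset$. (b) Conversely, if $W',W''\subset V$ satisfy $W'\cap W''=\emptyset$, $W'\cup W''=W$ and $\operatorname{cl}_W(W')\cap\operatorname{cl}_W(W'')=\emptyset$, then there do not exist $w'\in W'$ and $w''\in W''$ lying in the same equivalence class of $C_W$ (i.e. with $w'\,C_W\,w''$).
   Context: Relations on $V$: $x\,R\,y$ means $(x,y)\in R$; composition $RR'$: $x(RR')y$ iff there is $z$ with $xRz$ and $zR'y$; $R^{-1}$ is the converse; $R^0=\Delta$, $R^{n+1}=RR^n$, $R^+=\bigcup_{k\ge1}R^k$, $R^*=\bigcup_{k\ge0}R^k$. For $S\subset V$, $\Delta_S=\{(x,x):x\in S\}$, $\Delta=\Delta_V$. For any relation $F$, $\mathcal T_F=\{O\subset V: OF\subset O\}$ is a topology on $V$, where $OF=\{y:\exists o\in O,\ oFy\}$. With $W^c=V\setminus W$: $E_W=\Delta_{W^c}E$; $B_W=E(E_W)^*$; $B_W^-=(B_W)^{-1}=(E_W^{-1})^*E^{-1}$; $K_W=B_W^-\Delta_{W^c}B_W$; $C_W=(\Delta_WK_W\Delta_W)^+\cup\Delta_W$, a symmetric transitive relation (an equivalence relation on $W$). For $S\subset V$, $\operatorname{cl}_W(S)$ is the topological closure of $S$ in the topology $\mathcal T_{E_W}$.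 *)

theory Defs
  imports "HOL-Analysis.Analysis"
begin

text \<open>Relations on a carrier set V are sets of pairs. R^* relative to V is
  Delta_V union R^+ (so R^0 = Delta_V, not the identity on the whole type).\<close>

definition rstar :: "'a set \<Rightarrow> 'a rel \<Rightarrow> 'a rel" where
  "rstar V R = Id_on V \<union> R\<^sup>+"

definition EW :: "'a set \<Rightarrow> 'a rel \<Rightarrow> 'a set \<Rightarrow> 'a rel" where
  "EW V E W = Id_on (V - W) O E"

definition BW :: "'a set \<Rightarrow> 'a rel \<Rightarrow> 'a set \<Rightarrow> 'a rel" where
  "BW V E W = E O rstar V (EW V E W)"

definition BWm :: "'a set \<Rightarrow> 'a rel \<Rightarrow> 'a set \<Rightarrow> 'a rel" where
  "BWm V E W = converse (BW V E W)"

definition KW :: "'a set \<Rightarrow> 'a rel \<Rightarrow> 'a set \<Rightarrow> 'a rel" where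
  "KW V E W = BWm V E W O Id_on (V - W) O BW V E W"

definition CW :: "'a set \<Rightarrow> 'a rel \<Rightarrow> 'a set \<Rightarrow> 'a rel" where
  "CW V E W = (Id_on W O KW V E W O Id_on W)\<^sup>+ \<union> Id_on W"

definition rel_topology :: "'a set \<Rightarrow> 'a rel \<Rightarrow> 'a topology" where
  "rel_topology V F = topology (\<lambda>U. U \<subseteq> V \<and> F `` U \<subseteq> U)"

definition clW :: "'a set \<Rightarrow> 'a rel \<Rightarrow> 'a set \<Rightarrow> 'a set \<Rightarrow> 'a set" where
  "clW V E W S = rel_topology V (EW V E W) closure_of S"

end

theory Submission
  imports Defs
begin

text \<open>The topology of a relation F is an Alexandrov topology: a set is closed iff it is
  closed under F-predecessors, so the closure of S is the set of points from which S is
  F-reachable. For F = E_W the points of W are sinks, and a nontrivial E_W-path is exactly a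
  B_W-step out of a point of V - W. Hence the closures of two points s, t of W meet iff s = t
  or s K_W t, and the closures of two subsets of W meet iff those of some pair of their points
  do. This gives (a) at once; for (b) it shows that W' is closed under the generating relation
  of C_W, hence under C_W.\<close>

lemma openin_rel_topology:
  "openin (rel_topology V F) U \<longleftrightarrow> U \<subseteq> V \<and> F `` U \<subseteq> U"
proof -
  have "istopology (\<lambda>U. U \<subseteq> V \<and> F `` U \<subseteq> U)"
    unfolding istopology_def by blast
  then show ?thesis
    unfolding rel_topology_def by (simp add: topology_inverse')
qed

lemma topspace_rel_topology:
  assumes "F \<subseteq> V \<times> V"
  shows "topspace (rel_topology V F) = V"
  using assms unfolding topspace_def openin_rel_topology by blast

lemma closedin_rel_topology:
  assumes "F \<subseteq> V \<times> V"
  shows "closedin (rel_topology V F) C \<longleftrightarrow> C \<subseteq> V \<and> F\<inverse> `` C \<subseteq> C"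
  using assms
  unfolding closedin_def topspace_rel_topology[OF assms] openin_rel_topology
  by blast

lemma closure_of_rel_topology:
  assumes "F \<subseteq> V \<times> V"
  shows "rel_topology V F closure_of S = {x \<in> V. \<exists>s\<in>S. (x, s) \<in> F\<^sup>*}"
    (is "?cl = ?P")
proof
  have "F\<inverse> `` ?P \<subseteq> ?P"
  proof
    fix x assume "x \<in> F\<inverse> `` ?P"
    then obtain y s where "(x, y) \<in> F" "s \<in> S" "(y, s) \<in> F\<^sup>*"
      by blast
    then show "x \<in> ?P"
      using assms by (blast intro: converse_rtrancl_into_rtrancl)
  qed
  then have "closedin (rel_topology V F) ?P"
    by (simp add: closedin_rel_topology[OF assms])
  moreover have "topspace (rel_topology V F) \<inter> S \<subseteq> ?P"
    by (auto simp: topspace_rel_topology[OF assms])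
  ultimately show "?cl \<subseteq> ?P"
    by (subst closure_of_restrict) (rule closure_of_minimal)
next
  have "F\<inverse> `` ?cl \<subseteq> ?cl"
    using closedin_closure_of[of "rel_topology V F" S]
    unfolding closedin_rel_topology[OF assms] by (rule conjunct2)
  from Image_closed_trancl[OF this] have closed: "(F\<^sup>*)\<inverse> `` ?cl = ?cl"
    by (simp only: rtrancl_converse)
  show "?P \<subseteq> ?cl"
  proof
    fix x assume "x \<in> ?P"
    then obtain s where "x \<in> V" "s \<in> S" and xs: "(x, s) \<in> F\<^sup>*"
      by blast
    from xs have "s \<in> V"
      using \<open>x \<in> V\<close> assms by (cases rule: rtranclE) auto
    then have "s \<in> ?cl"
      using \<open>s \<in> S\<close> closure_of_subset_Int[of "rel_topology V F" S]
      by (auto simp: topspace_rel_topology[OF assms])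
    with xs have "x \<in> (F\<^sup>*)\<inverse> `` ?cl"
      by blast
    then show "x \<in> ?cl"
      using closed by simp
  qed
qed

lemma EW_subset: "E \<subseteq> V \<times> V \<Longrightarrow> EW V E W \<subseteq> V \<times> V"
  unfolding EW_def by blast

lemma not_EW_from_W: "w \<in> W \<Longrightarrow> (w, x) \<notin> EW V E W"
  unfolding EW_def by blast

lemma rtrancl_EW_from_W: "w \<in> W \<Longrightarrow> (w, x) \<in> (EW V E W)\<^sup>* \<longleftrightarrow> x = w"
  by (auto elim: converse_rtranclE dest: not_EW_from_W)

lemma rstar_subset_rtrancl: "rstar V R \<subseteq> R\<^sup>*"
  unfolding rstar_def by (auto dest: trancl_into_rtrancl)

lemma trancl_EW_iff:
  assumes "E \<subseteq> V \<times> V"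
  shows "(z, w) \<in> (EW V E W)\<^sup>+ \<longleftrightarrow> z \<in> V - W \<and> (z, w) \<in> BW V E W"
proof
  assume "(z, w) \<in> (EW V E W)\<^sup>+"
  then obtain a where za: "(z, a) \<in> EW V E W" and aw: "(a, w) \<in> (EW V E W)\<^sup>*"
    by (blast dest: tranclD)
  have "a \<in> V"
    using za EW_subset[OF assms] by blast
  with aw have "(a, w) \<in> rstar V (EW V E W)"
    unfolding rstar_def by (auto simp: rtrancl_eq_or_trancl)
  with za show "z \<in> V - W \<and> (z, w) \<in> BW V E W"
    unfolding BW_def EW_def by blast
next
  assume "z \<in> V - W \<and> (z, w) \<in> BW V E W"
  then obtain a where "(z, a) \<in> EW V E W" "(a, w) \<in> rstar V (EW V E W)"
    unfolding BW_def EW_def by blast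
  then show "(z, w) \<in> (EW V E W)\<^sup>+"
    using rstar_subset_rtrancl by (blast intro: rtrancl_into_trancl2)
qed

lemma clW_eq:
  assumes "E \<subseteq> V \<times> V"
  shows "clW V E W S = {x \<in> V. \<exists>s\<in>S. (x, s) \<in> (EW V E W)\<^sup>*}"
  unfolding clW_def by (rule closure_of_rel_topology[OF EW_subset[OF assms]])

lemma clW_singletons_meet_iff:
  assumes "E \<subseteq> V \<times> V" "W \<subseteq> V" "s \<in> W" "t \<in> W"
  shows "clW V E W {s} \<inter> clW V E W {t} \<noteq> {} \<longleftrightarrow> s = t \<or> (s, t) \<in> KW V E W"
proof
  assume "clW V E W {s} \<inter> clW V E W {t} \<noteq> {}"
  then obtain z where zs: "(z, s) \<in> (EW V E W)\<^sup>*" and zt: "(z, t) \<in> (EW V E W)\<^sup>*"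
    by (auto simp: clW_eq[OF assms(1)])
  show "s = t \<or> (s, t) \<in> KW V E W"
  proof (cases "z \<in> W")
    case True
    then show ?thesis
      using zs zt by (simp add: rtrancl_EW_from_W)
  next
    case False
    with zs zt assms(3,4) have "(z, s) \<in> (EW V E W)\<^sup>+" "(z, t) \<in> (EW V E W)\<^sup>+"
      by (auto simp: rtrancl_eq_or_trancl)
    then show ?thesis
      unfolding trancl_EW_iff[OF assms(1)] KW_def BWm_def by blast
  qed
next
  assume "s = t \<or> (s, t) \<in> KW V E W"
  then obtain z where "z \<in> V" "(z, s) \<in> (EW V E W)\<^sup>*" "(z, t) \<in> (EW V E W)\<^sup>*"
  proof
    assume "s = t"
    then show ?thesis
      using that assms(2,3) by blast
  next
    assume "(s, t) \<in> KW V E W"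
    then obtain z where "z \<in> V - W" "(z, s) \<in> BW V E W" "(z, t) \<in> BW V E W"
      unfolding KW_def BWm_def by blast
    then have "(z, s) \<in> (EW V E W)\<^sup>+" "(z, t) \<in> (EW V E W)\<^sup>+"
      by (simp_all add: trancl_EW_iff[OF assms(1)])
    with \<open>z \<in> V - W\<close> show ?thesis
      by (intro that[of z]) (simp_all add: trancl_into_rtrancl)
  qed
  then show "clW V E W {s} \<inter> clW V E W {t} \<noteq> {}"
    by (auto simp: clW_eq[OF assms(1)])
qed

lemma clW_eq_UN_singletons:
  assumes "E \<subseteq> V \<times> V"
  shows "clW V E W S = (\<Union>s\<in>S. clW V E W {s})"
  by (auto simp: clW_eq[OF assms])

lemma clW_meet_iff:
  assumes "E \<subseteq> V \<times> V" "W \<subseteq> V" "S \<subseteq> W" "T \<subseteq> W"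
  shows "clW V E W S \<inter> clW V E W T \<noteq> {} \<longleftrightarrow> (\<exists>s\<in>S. \<exists>t\<in>T. s = t \<or> (s, t) \<in> KW V E W)"
proof -
  have "clW V E W S \<inter> clW V E W T \<noteq> {}
      \<longleftrightarrow> (\<exists>s\<in>S. \<exists>t\<in>T. clW V E W {s} \<inter> clW V E W {t} \<noteq> {})"
    by (subst (1 2) clW_eq_UN_singletons[OF assms(1)]) blast
  also have "\<dots> \<longleftrightarrow> (\<exists>s\<in>S. \<exists>t\<in>T. s = t \<or> (s, t) \<in> KW V E W)"
    using clW_singletons_meet_iff[OF assms(1,2)] assms(3,4) by (meson subsetD)
  finally show ?thesis .
qed

lemma equiv_CW: "equiv W (CW V E W)"
proof (rule equivI)
  let ?R = "Id_on W O KW V E W O Id_on W"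
  have "sym ?R"
    unfolding sym_def KW_def BWm_def by blast
  then show "sym (CW V E W)"
    unfolding CW_def by (simp add: sym_Un sym_trancl sym_Id_on)
  show "trans (CW V E W)"
    using trans_trancl[of ?R] unfolding CW_def trans_def by blast
  have "?R\<^sup>+ \<subseteq> W \<times> W"
    by (rule trancl_subset_Sigma) blast
  then show "CW V E W \<subseteq> W \<times> W" "refl_on W (CW V E W)"
    unfolding CW_def refl_on_def by blast+
qed

lemma CW_if_clW_meet:
  assumes "E \<subseteq> V \<times> V" "W \<subseteq> V" "S \<subseteq> W" "T \<subseteq> W"
    and "clW V E W S \<inter> clW V E W T \<noteq> {}"
  obtains s t where "s \<in> S" "t \<in> T" "(s, t) \<in> CW V E W"
proof -
  obtain s t where "s \<in> S" "t \<in> T" "s = t \<or> (s, t) \<in> KW V E W"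
    using assms(5) clW_meet_iff[OF assms(1-4)] by blast
  moreover from this have "s \<in> W" "t \<in> W"
    using assms(3,4) by blast+
  ultimately show ?thesis
    by (intro that[of s t]) (unfold CW_def, blast+)
qed

lemma CW_Image_subset:
  assumes "E \<subseteq> V \<times> V" "W \<subseteq> V" "S \<subseteq> W"
    and "clW V E W S \<inter> clW V E W (W - S) = {}"
  shows "CW V E W `` S \<subseteq> S"
proof -
  let ?R = "Id_on W O KW V E W O Id_on W"
  have "?R `` S \<subseteq> S"
    using assms clW_meet_iff[OF assms(1,2,3), of "W - S"] by blast
  then have "?R\<^sup>* `` S = S"
    by (rule Image_closed_trancl)
  moreover have "?R\<^sup>+ `` S \<subseteq> ?R\<^sup>* `` S"
    by (rule Image_mono) (auto dest: trancl_into_rtrancl)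
  ultimately have "?R\<^sup>+ `` S \<subseteq> S"
    by simp
  then show ?thesis
    unfolding CW_def by blast
qed

theorem lemma2:
  fixes V :: "'a set" and E :: "'a rel" and W :: "'a set"
  assumes "V \<noteq> {}" and "E \<subseteq> V \<times> V" and "W \<subseteq> V"
  shows "(\<forall>W' W''. W' \<subseteq> W \<and> W'' \<subseteq> W \<and>
            (\<exists>X \<in> W // CW V E W. \<exists>Y \<in> W // CW V E W. X \<noteq> Y \<and> W' \<subseteq> X \<and> W'' \<subseteq> Y)
            \<longrightarrow> clW V E W W' \<inter> clW V E W W'' = {})
       \<and> (\<forall>W' W''. W' \<subseteq> V \<and> W'' \<subseteq> V \<and> W' \<inter> W'' = {} \<and> W' \<union> W'' = W \<and>
            clW V E W W' \<inter> clW V E W W'' = {}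
            \<longrightarrow> \<not> (\<exists>w' \<in> W'. \<exists>w'' \<in> W''. (w', w'') \<in> CW V E W))"
proof (intro conjI allI impI; elim conjE)
  fix W' W'' assume "W' \<subseteq> W" "W'' \<subseteq> W"
    and "\<exists>X \<in> W // CW V E W. \<exists>Y \<in> W // CW V E W. X \<noteq> Y \<and> W' \<subseteq> X \<and> W'' \<subseteq> Y"
  then obtain X Y where XY: "X \<in> W // CW V E W" "Y \<in> W // CW V E W" "X \<noteq> Y"
    and "W' \<subseteq> X" "W'' \<subseteq> Y"
    by blast
  show "clW V E W W' \<inter> clW V E W W'' = {}"
  proof (rule ccontr)
    assume "clW V E W W' \<inter> clW V E W W'' \<noteq> {}"
    then obtain s t where "s \<in> W'" "t \<in> W''" "(s, t) \<in> CW V E W"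
      by (rule CW_if_clW_meet[OF assms(2,3) \<open>W' \<subseteq> W\<close> \<open>W'' \<subseteq> W\<close>])
    then have "X = Y"
      using quotient_eq_iff[OF equiv_CW XY(1,2), of s t] \<open>W' \<subseteq> X\<close> \<open>W'' \<subseteq> Y\<close> by blast
    with \<open>X \<noteq> Y\<close> show False ..
  qed
next
  fix W' W'' assume "W' \<inter> W'' = {}" "W' \<union> W'' = W"
    and "clW V E W W' \<inter> clW V E W W'' = {}"
  then have "W'' = W - W'" "W' \<subseteq> W"
    by blast+
  with \<open>clW V E W W' \<inter> clW V E W W'' = {}\<close> have "CW V E W `` W' \<subseteq> W'"
    using CW_Image_subset[OF assms(2,3)] by simp
  then show "\<not> (\<exists>w' \<in> W'. \<exists>w'' \<in> W''. (w', w'') \<in> CW V E W)"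
    using \<open>W' \<inter> W'' = {}\<close> by blast
qed

end
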